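(* Let $m\ge3$ and let $c_j(a)$, $0\le j\le m+1$, be as defined in the context. Then: (i) each $c_j(a)$ is a polynomial in $a_1,\dots,a_m$; (ii) $c_0(a)$ is independent of $a$; (iii) for $1\le j\le m$, $c_j(a)$ depends only on $a_1,\dots,a_j$ and is a non-constant affine-linear function of $a_j$ (for fixed $a_1,\dots,a_{j-1}$).
   Context: $a=(a_1,\dots,a_m)\in\mathbb C^m$, $P(z)=a_1z^{m-1}+\dots+a_m$, $\binom{1/2}{k}=\frac{\frac12(\frac12-1)\cdots(\frac12-k+1)}{k!}$. For $j\ge1$, $1\le k\le j$, $b_{j,k}(a)$ is the coefficient of $z^{mk-j}$ in $\binom{1/2}{k}P(z)^k$ ($0$ if $mk-j<0$), $b_j(a)=\sum_{k=1}^jb_{j,k}(a)$, $\nu(a)=0$ for $m$ odd and $\nu(a)=b_{\frac m2+1}(a)$ for $m$ even. $g_j(\tau)=\sum_{k=1}^{j}b_{j,k}(a)\tau^{mk-j}(\tau^m+1)^{-(k-\frac12)}$. $K_{m,0}=\int_0^\infty(\sqrt{1+t^m}-t^{m/2})dt$; $K_{m,j}(a)=\int_0^\infty(g_j(t)-b_j(a)t^{\frac m2-j})dt$ for $1\le j\le\frac{m+1}2$; $K_{m,\frac m2+1}(a)=\int_0^\infty(g_{\frac m2+1}(t)-\frac{b_{\frac m2+1}(a)}{t+1})dt$ for $m$ even; $K_{m,j}(a)=\int_0^\infty g_j(t)dt$ for $j\ge\frac{m+3}2$. Then $c_j(a)=\frac1\pi\cos(\frac{(j-1)\pi}m)K_{m,j}(a)$,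 except $c_{\frac m2+1}(a)=-\frac{\nu(a)}m$ when $m$ is even. *)

theory Defs
  imports "HOL-Analysis.Analysis" "HOL-Computational_Algebra.Polynomial"
begin

text \<open>The coefficient vector a = (a_1,...,a_m) is represented as a function
  a :: nat => complex; only the values a 1, ..., a m are used.\<close>

definition Ppoly :: "nat \<Rightarrow> (nat \<Rightarrow> complex) \<Rightarrow> complex poly" where
  "Ppoly m a = (\<Sum>i=1..m. monom (a i) (m - i))"

definition bjk :: "nat \<Rightarrow> (nat \<Rightarrow> complex) \<Rightarrow> nat \<Rightarrow> nat \<Rightarrow> complex" where
  "bjk m a j k = (if m * k < j then 0
      else coeff (smult ((1/2 :: complex) gchoose k) (Ppoly m a ^ k)) (m * k - j))"

definition bj :: "nat \<Rightarrow> (nat \<Rightarrow> complex) \<Rightarrow> nat \<Rightarrow> complex" where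
  "bj m a j = (\<Sum>k=1..j. bjk m a j k)"

definition nu :: "nat \<Rightarrow> (nat \<Rightarrow> complex) \<Rightarrow> complex" where
  "nu m a = (if odd m then 0 else bj m a (m div 2 + 1))"

definition gj :: "nat \<Rightarrow> (nat \<Rightarrow> complex) \<Rightarrow> nat \<Rightarrow> real \<Rightarrow> complex" where
  "gj m a j \<tau> = (\<Sum>k=1..j. bjk m a j k *
      complex_of_real (\<tau> powr (real (m * k) - real j) *
                       (\<tau> ^ m + 1) powr (- (real k - 1/2))))"

definition Kmj :: "nat \<Rightarrow> nat \<Rightarrow> (nat \<Rightarrow> complex) \<Rightarrow> complex" where
  "Kmj m j a =
    (if j = 0 then
       integral {0<..} (\<lambda>t::real. complex_of_real (sqrt (1 + t ^ m) - t powr (real m / 2)))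
     else if 2 * j \<le> m + 1 then
       integral {0<..} (\<lambda>t::real. gj m a j t - bj m a j * complex_of_real (t powr (real m / 2 - real j)))
     else if even m \<and> j = m div 2 + 1 then
       integral {0<..} (\<lambda>t::real. gj m a j t - bj m a j / complex_of_real (t + 1))
     else
       integral {0<..} (\<lambda>t::real. gj m a j t))"

definition cj :: "nat \<Rightarrow> nat \<Rightarrow> (nat \<Rightarrow> complex) \<Rightarrow> complex" where
  "cj m j a =
    (if even m \<and> j = m div 2 + 1 then - nu m a / of_nat m
     else complex_of_real (cos ((real j - 1) * pi / real m) / pi) * Kmj m j a)"

end

theory Submission
  imports Defs
begin

text \<open>
  Put F_k(t) = t^(mk-j) (t^m+1)^(-(k-1/2)), so that g_j = \<Sum>_k b_{j,k} F_k and
  b_j = \<Sum>_k b_{j,k}.  Away from the exceptional index j = m/2 + 1 the regularised integral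
  K_{m,j}(a) therefore splits as \<Sum>_k b_{j,k}(a) w_k, where the weights
  w_k = \<integral>_0^\<infinity> (F_k(t) - t^(m/2-j)) dt (the power is subtracted only when 2j \<le> m+1)
  do not depend on a; at the exceptional index c_j is -1/m times \<Sum>_k b_{j,k}(a).  In both
  cases c_j(a) = C * \<Sum>_{k=1..j} b_{j,k}(a) w_k with C w_1 \<noteq> 0 whenever j \<le> m.

  The theorem follows: such a weighted sum is a polynomial,
  involves only a_1,...,a_j, and is affine in a_j with slope C w_1/2 \<noteq> 0, while c_0 does
  not involve a at all.
\<close>

section \<open>Polynomial functions of the coefficient vector\<close>

definition mpoly :: "nat \<Rightarrow> ((nat \<Rightarrow> complex) \<Rightarrow> complex) \<Rightarrow> bool" where
  "mpoly m f \<longleftrightarrow>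
     (\<exists>S coef. finite S \<and> (\<forall>a. f a = (\<Sum>\<alpha>\<in>S. coef \<alpha> * (\<Prod>i=1..m. a i ^ \<alpha> i))))"

lemma mpoly_const: "mpoly m (\<lambda>a. c)"
  unfolding mpoly_def
  by (rule exI[of _ "{\<lambda>_. 0}"], rule exI[of _ "\<lambda>_. c"]) simp

lemma mpoly_var:
  assumes "1 \<le> i" "i \<le> m"
  shows "mpoly m (\<lambda>a. a i)"
  unfolding mpoly_def
proof (rule exI[of _ "{\<lambda>l. if l = i then 1 else 0}"], rule exI[of _ "\<lambda>_. 1"], intro conjI allI)
  fix a :: "nat \<Rightarrow> complex"
  have "(\<Prod>l=1..m. a l ^ (if l = i then 1 else 0)) = (\<Prod>l=1..m. if l = i then a l else 1)"
    by (rule prod.cong) auto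
  also have "\<dots> = a i"
    using assms by (subst prod.delta) auto
  finally show "a i = (\<Sum>\<alpha>\<in>{\<lambda>l. if l = i then 1 else 0}. 1 * (\<Prod>l=1..m. a l ^ \<alpha> l))"
    by simp
qed simp

lemma mpoly_add:
  assumes "mpoly m f" "mpoly m g"
  shows "mpoly m (\<lambda>a. f a + g a)"
proof -
  from assms obtain S c T d
    where S: "finite S" "\<And>a. f a = (\<Sum>\<alpha>\<in>S. c \<alpha> * (\<Prod>i=1..m. a i ^ \<alpha> i))"
      and T: "finite T" "\<And>a. g a = (\<Sum>\<alpha>\<in>T. d \<alpha> * (\<Prod>i=1..m. a i ^ \<alpha> i))"
    unfolding mpoly_def by blast
  define e where "e \<alpha> = (if \<alpha> \<in> S then c \<alpha> else 0) + (if \<alpha> \<in> T then d \<alpha> else 0)" for \<alpha>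
  have "f a + g a = (\<Sum>\<alpha>\<in>S \<union> T. e \<alpha> * (\<Prod>i=1..m. a i ^ \<alpha> i))" for a
  proof -
    have "(\<Sum>\<alpha>\<in>S \<union> T. e \<alpha> * (\<Prod>i=1..m. a i ^ \<alpha> i)) =
        (\<Sum>\<alpha>\<in>S \<union> T. if \<alpha> \<in> S then c \<alpha> * (\<Prod>i=1..m. a i ^ \<alpha> i) else 0) +
        (\<Sum>\<alpha>\<in>S \<union> T. if \<alpha> \<in> T then d \<alpha> * (\<Prod>i=1..m. a i ^ \<alpha> i) else 0)"
      unfolding e_def sum.distrib[symmetric] by (intro sum.cong refl) (simp add: distrib_right)
    also have "\<dots> = f a + g a"
      unfolding S(2) T(2) using S(1) T(1) by (simp add: sum.If_cases Int_absorb1 Int_absorb2)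
    finally show ?thesis by simp
  qed
  then show ?thesis
    unfolding mpoly_def using S(1) T(1) by blast
qed

lemma mpoly_mult:
  assumes "mpoly m f" "mpoly m g"
  shows "mpoly m (\<lambda>a. f a * g a)"
proof -
  from assms obtain S c T d
    where S: "finite S" "\<And>a. f a = (\<Sum>\<alpha>\<in>S. c \<alpha> * (\<Prod>i=1..m. a i ^ \<alpha> i))"
      and T: "finite T" "\<And>a. g a = (\<Sum>\<alpha>\<in>T. d \<alpha> * (\<Prod>i=1..m. a i ^ \<alpha> i))"
    unfolding mpoly_def by blast
  define M where "M \<alpha> a = (\<Prod>i=1..m. (a i :: complex) ^ \<alpha> i)" for \<alpha> :: "nat \<Rightarrow> nat" and a
  \<comment> \<open>multiplying monomials adds their exponent vectors\<close>
  define plus where "plus p = (\<lambda>i. fst p i + snd p i)" for p :: "(nat \<Rightarrow> nat) \<times> (nat \<Rightarrow> nat)"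
  define U where "U = plus ` (S \<times> T)"
  define e where "e \<gamma> = (\<Sum>p\<in>{p\<in>S \<times> T. plus p = \<gamma>}. c (fst p) * d (snd p))" for \<gamma>
  have "f a * g a = (\<Sum>\<gamma>\<in>U. e \<gamma> * M \<gamma> a)" for a
  proof -
    have "f a * g a = (\<Sum>p\<in>S \<times> T. c (fst p) * d (snd p) * M (plus p) a)"
      unfolding S(2) T(2) sum_product sum.cartesian_product
      by (rule sum.cong) (auto simp: M_def plus_def power_add prod.distrib)
    also have "\<dots> = (\<Sum>\<gamma>\<in>U. \<Sum>p\<in>{p\<in>S \<times> T. plus p = \<gamma>}. c (fst p) * d (snd p) * M (plus p) a)"
      unfolding U_def using S(1) T(1) by (rule sum.image_gen[OF finite_cartesian_product])
    also have "\<dots> = (\<Sum>\<gamma>\<in>U. e \<gamma> * M \<gamma> a)"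
      unfolding e_def sum_distrib_right by (intro sum.cong refl) auto
    finally show ?thesis .
  qed
  moreover have "finite U"
    unfolding U_def using S(1) T(1) by simp
  ultimately show ?thesis
    unfolding mpoly_def M_def by blast
qed

lemma mpoly_sum:
  assumes "finite I" "\<And>i. i \<in> I \<Longrightarrow> mpoly m (f i)"
  shows "mpoly m (\<lambda>a. \<Sum>i\<in>I. f i a)"
  using assms by (induction I rule: finite_induct) (auto intro: mpoly_add mpoly_const)

section \<open>The coefficients b_{j,k}\<close>

lemma coeff_Ppoly: "coeff (Ppoly m a) n = (if n < m then a (m - n) else 0)"
proof -
  have "coeff (Ppoly m a) n = (\<Sum>i=1..m. if m - i = n then a i else 0)"
    unfolding Ppoly_def by (simp add: coeff_sum)
  also have "\<dots> = (\<Sum>i=1..m. if i = m - n \<and> n < m then a i else 0)"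
    by (rule sum.cong) auto
  also have "\<dots> = (if n < m then a (m - n) else 0)"
    by (cases "n < m") auto
  finally show ?thesis .
qed

lemma degree_Ppoly: "degree (Ppoly m a) \<le> m - 1"
  by (rule degree_le) (auto simp: coeff_Ppoly)

lemma mpoly_coeff_Ppoly_power: "mpoly m (\<lambda>a. coeff (Ppoly m a ^ k) n)"
proof (induction k arbitrary: n)
  case 0
  then show ?case by (simp add: mpoly_const)
next
  case (Suc k)
  have "mpoly m (\<lambda>a. coeff (Ppoly m a) i)" for i
    unfolding coeff_Ppoly by (cases "i < m") (auto intro: mpoly_var mpoly_const)
  then show ?case
    unfolding power_Suc coeff_mult by (intro mpoly_sum mpoly_mult Suc) auto
qed

lemma mpoly_bjk: "mpoly m (\<lambda>a. bjk m a j k)"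
  unfolding bjk_def coeff_smult
  by (cases "m * k < j") (auto intro: mpoly_mult mpoly_const mpoly_coeff_Ppoly_power)

text \<open>If two polynomials of degree at most d agree in their top coefficients (degrees
  > d - r), then so do their k-th powers (degrees > k d - r): every product of coefficients
  contributing to such a degree uses only top coefficients of the factors.\<close>

lemma coeff_power_top_agree:
  fixes p q :: "'a::comm_semiring_1 poly"
  assumes top: "\<And>i. d < i + r \<Longrightarrow> coeff p i = coeff q i"
    and deg: "degree p \<le> d" "degree q \<le> d"
    and n: "k * d < n + r"
  shows "coeff (p ^ k) n = coeff (q ^ k) n"
  using n
proof (induction k arbitrary: n)
  case 0
  then show ?case by simp
next
  case (Suc k)
  have deg_pow: "degree (p ^ k) \<le> k * d" "degree (q ^ k) \<le> k * d"
    using degree_power_le[of p k] degree_power_le[of q k] deg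
    by (metis mult.commute mult_le_mono2 order_trans)+
  have "coeff p i * coeff (p ^ k) (n - i) = coeff q i * coeff (q ^ k) (n - i)" if "i \<le> n" for i
  proof (cases "d < i + r")
    case True
    show ?thesis
    proof (cases "i \<le> d")
      case True
      then have "k * d < (n - i) + r"
        using Suc.prems that by simp
      then show ?thesis
        using Suc.IH top[OF \<open>d < i + r\<close>] by simp
    next
      case False
      then have "coeff p i = 0" "coeff q i = 0"
        using deg by (auto intro: coeff_eq_0)
      then show ?thesis by simp
    qed
  next
    case False
    then have "k * d < n - i"
      using Suc.prems that by simp
    then have "coeff (p ^ k) (n - i) = 0" "coeff (q ^ k) (n - i) = 0"
      using deg_pow by (auto intro: coeff_eq_0)
    then show ?thesis by simp
  qed
  then show ?case
    unfolding power_Suc coeff_mult by (intro sum.cong) auto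
qed

text \<open>Locality of b_{j,k}: it only involves a_1,...,a_r as soon as j < k + r.  With r = j
  this covers all k \<ge> 1, with r = j - 1 all k \<ge> 2.\<close>

lemma bjk_local:
  assumes agree: "\<forall>i\<in>{1..r}. a i = a' i" and "1 \<le> j" "j < k + r"
  shows "bjk m a j k = bjk m a' j k"
proof (cases "m * k < j")
  case False
  have "0 < m"
    using False \<open>1 \<le> j\<close> by (cases "m = 0") auto
  then have "k \<le> m * k" "k * (m - 1) = m * k - k"
    by (auto simp: diff_mult_distrib2 mult.commute)
  then have deg_bound: "k * (m - 1) < m * k - j + r"
    using False \<open>j < k + r\<close> by linarith
  have "coeff (Ppoly m a) i = coeff (Ppoly m a') i" if "m - 1 < i + r" for i
    using that by (auto simp: coeff_Ppoly intro!: bspec[OF agree])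
  then have "coeff (Ppoly m a ^ k) (m * k - j) = coeff (Ppoly m a' ^ k) (m * k - j)"
    by (intro coeff_power_top_agree[OF _ degree_Ppoly degree_Ppoly deg_bound])
  then show ?thesis
    unfolding bjk_def coeff_smult by simp
qed (simp add: bjk_def)

text \<open>The linear term: b_{j,1} = binom(1/2,1) a_j = a_j/2 for 1 \<le> j \<le> m.\<close>

lemma bjk_first:
  assumes "1 \<le> j" "j \<le> m"
  shows "bjk m a j 1 = a j / 2"
  using assms by (simp add: bjk_def coeff_Ppoly)

lemma mpoly_weighted_sum: "mpoly m (\<lambda>a. C * (\<Sum>k=1..j. bjk m a j k * w k))"
  by (intro mpoly_mult mpoly_sum mpoly_bjk mpoly_const) auto

lemma weighted_sum_local:
  assumes "\<forall>i\<in>{1..j}. a i = a' i"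
  shows "(\<Sum>k=1..j. bjk m a j k * w k) = (\<Sum>k=1..j. bjk m a' j k * w k)"
proof (intro sum.cong refl)
  fix k
  assume "k \<in> {1..j}"
  then show "bjk m a j k * w k = bjk m a' j k * w k"
    using bjk_local[OF assms, of j k] by auto
qed

lemma weighted_sum_affine:
  assumes "1 \<le> j" "j \<le> m"
  shows "(\<Sum>k=1..j. bjk m (a(j := z)) j k * w k) = z / 2 * w 1 + (\<Sum>k=2..j. bjk m a j k * w k)"
proof -
  have "(\<Sum>k=1..j. bjk m (a(j := z)) j k * w k) =
      bjk m (a(j := z)) j 1 * w 1 + (\<Sum>k=2..j. bjk m (a(j := z)) j k * w k)"
    using sum.atLeast_Suc_atMost[OF \<open>1 \<le> j\<close>] by (simp add: numeral_2_eq_2)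
  also have "bjk m (a(j := z)) j 1 = z / 2"
    using bjk_first[OF assms] by simp
  also have "(\<Sum>k=2..j. bjk m (a(j := z)) j k * w k) = (\<Sum>k=2..j. bjk m a j k * w k)"
    by (intro sum.cong refl arg_cong2[where f = "(*)"] bjk_local[where r = "j - 1"]) auto
  finally show ?thesis .
qed

section \<open>Improper integrals over (0,\<infinity>)\<close>

lemma integrable_by_power_bounds:
  fixes f :: "real \<Rightarrow> real"
  assumes cont: "continuous_on {0<..} f"
    and near0: "\<And>t. 0 < t \<Longrightarrow> t \<le> 1 \<Longrightarrow> \<bar>f t\<bar> \<le> t powr \<alpha>" and "\<alpha> > -1"
    and near_inf: "\<And>t. 1 \<le> t \<Longrightarrow> \<bar>f t\<bar> \<le> C * t powr \<beta>" and "\<beta> < -1"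
  shows "f integrable_on {0<..}"
proof -
  have meas: "f \<in> borel_measurable (lebesgue_on S)" if "S \<subseteq> {0<..}" "S \<in> sets lebesgue" for S
    by (rule continuous_imp_measurable_on_sets_lebesgue[OF continuous_on_subset[OF cont that(1)] that(2)])
  have sub: "{0<..1} \<subseteq> {0::real<..}" "{1..} \<subseteq> {0::real<..}"
    by auto
  have "f absolutely_integrable_on {0<..1}"
  proof (rule measurable_bounded_by_integrable_imp_absolutely_integrable)
    show "f \<in> borel_measurable (lebesgue_on {0<..1})"
      by (rule meas[OF sub(1)]) simp
    show "(\<lambda>t. t powr \<alpha>) integrable_on {0<..1}"
      by (rule integrable_on_powr_from_0') (use \<open>\<alpha> > -1\<close> in auto)
  qed (use near0 in auto)
  moreover have "f absolutely_integrable_on {1..}"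
  proof (rule measurable_bounded_by_integrable_imp_absolutely_integrable)
    show "f \<in> borel_measurable (lebesgue_on {1..})"
      by (rule meas[OF sub(2)]) simp
    show "(\<lambda>t. C * t powr \<beta>) integrable_on {1..}"
      using has_integral_powr_to_inf[OF \<open>\<beta> < -1\<close>, of 1]
      by (intro integrable_on_mult_right) (auto simp: integrable_on_def)
  qed (use near_inf in auto)
  moreover have "{0<..1} \<inter> {1..} = {1::real}" "{0<..1} \<union> {1..} = {0::real<..}"
    by auto
  ultimately show ?thesis
    unfolding absolutely_integrable_on_def using integrable_Un'[of f "{0<..1}" "{1..}"] by simp
qed

lemma integral_pos_if_pos_at_1:
  fixes f :: "real \<Rightarrow> real"
  assumes cont: "continuous_on {0<..} f" and int: "f integrable_on {0<..}"
    and nonneg: "\<And>t. 0 < t \<Longrightarrow> 0 \<le> f t" and "f 1 > 0"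
  shows "integral {0<..} f > 0"
proof -
  have int12: "f integrable_on {1..2}"
    by (rule integrable_on_subinterval[OF int]) auto
  have "integral {1..2} f \<noteq> 0"
  proof
    assume "integral {1..2} f = 0"
    then have "(f has_integral 0) (cbox 1 2)"
      using int12 by (metis has_integral_integrable_integral cbox_interval)
    then have "f 1 = 0"
      using has_integral_0_cbox_imp_0[of 1 2 f 1] nonneg continuous_on_subset[OF cont, of "{1..2}"]
      by (auto simp: subset_iff)
    with \<open>f 1 > 0\<close> show False by simp
  qed
  moreover have "integral {1..2} f \<ge> 0"
    by (rule integral_nonneg[OF int12]) (use nonneg in auto)
  moreover have "integral {1..2} f \<le> integral {0<..} f"
    by (rule integral_subset_le[OF _ int12 int]) (use nonneg in auto)
  ultimately show ?thesis by simp
qed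

text \<open>Integrals of complex linear combinations of real functions; a summand with zero
  coefficient need not be integrable.\<close>

lemma integral_lincomb_of_real:
  fixes f :: "nat \<Rightarrow> real \<Rightarrow> real" and b :: "nat \<Rightarrow> complex"
  assumes "finite K" "\<And>k. k \<in> K \<Longrightarrow> b k \<noteq> 0 \<Longrightarrow> f k integrable_on S"
  shows "integral S (\<lambda>t. \<Sum>k\<in>K. b k * of_real (f k t)) = (\<Sum>k\<in>K. b k * of_real (integral S (f k)))"
proof -
  have summand: "((\<lambda>t. b k * of_real (f k t)) has_integral b k * of_real (integral S (f k))) S"
    if "k \<in> K" for k
  proof (cases "b k = 0")
    case False
    show ?thesis
      by (rule has_integral_mult_right[OF has_integral_of_real[OF
            integrable_integral[OF assms(2)[OF that False]]]])
  qed simp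
  show ?thesis
    by (intro integral_unique has_integral_sum assms(1) summand)
qed

section \<open>The kernels and their weights\<close>

text \<open>The kernel F_k that multiplies b_{j,k} in g_j, the power t^(m/2-j) that is subtracted
  to make its integral converge when 2j \<le> m + 1, and the resulting weights w_k.\<close>

definition kernel :: "nat \<Rightarrow> nat \<Rightarrow> nat \<Rightarrow> real \<Rightarrow> real" where
  "kernel m j k t = t powr (real (m * k) - real j) * (t ^ m + 1) powr (- (real k - 1/2))"

definition principal :: "nat \<Rightarrow> nat \<Rightarrow> real \<Rightarrow> real" where
  "principal m j t = (if 2 * j \<le> m + 1 then t powr (real m / 2 - real j) else 0)"

definition weight :: "nat \<Rightarrow> nat \<Rightarrow> nat \<Rightarrow> real" where
  "weight m j k = integral {0<..} (\<lambda>t. kernel m j k t - principal m j t)"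

lemma kernel_nonneg: "0 \<le> kernel m j k t"
  by (simp add: kernel_def)

lemma continuous_on_kernel: "continuous_on {0<..} (kernel m j k)"
proof -
  have "t ^ m + 1 \<noteq> 0" if "t \<in> {0<..}" for t :: real
  proof -
    have "0 < t ^ m + 1"
      using that by (simp add: add_pos_pos)
    then show ?thesis
      by simp
  qed
  then show ?thesis
    unfolding kernel_def by (intro continuous_intros) auto
qed

lemma continuous_on_principal: "continuous_on {0<..} (principal m j)"
proof (cases "2 * j \<le> m + 1")
  case True
  have "continuous_on {0<..} (\<lambda>t::real. t powr (real m / 2 - real j))"
    by (intro continuous_intros) auto
  then show ?thesis
    using True unfolding principal_def by simp
qed (simp add: principal_def)

text \<open>For t > 0 the kernel is t^(m/2-j) u^(k-1/2) with u = t^m/(t^m+1) \<in> (0,1); all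
  estimates below come from this form.\<close>

lemma kernel_factored:
  assumes "t > 0"
  shows "kernel m j k t = t powr (real m / 2 - real j) * (t ^ m / (t ^ m + 1)) powr (real k - 1/2)"
proof -
  have e: "real (m * k) - real j = (real m / 2 - real j) + real m * (real k - 1/2)"
    by (simp add: algebra_simps)
  have "t powr (real m * (real k - 1/2)) = (t ^ m) powr (real k - 1/2)"
    using assms by (simp only: powr_powr[symmetric] powr_realpow)
  then have "kernel m j k t =
      t powr (real m / 2 - real j) * ((t ^ m) powr (real k - 1/2) / (t ^ m + 1) powr (real k - 1/2))"
    unfolding kernel_def e powr_add by (simp only: powr_minus divide_inverse mult.assoc)
  then show ?thesis
    by (simp add: powr_divide)
qed

lemma kernel_le_power:
  assumes "t > 0" "k \<ge> 1"
  shows "kernel m j k t \<le> t powr (real m / 2 - real j)"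
proof -
  have "0 < t ^ m + 1"
    using assms by (intro add_pos_pos) auto
  then have "t ^ m / (t ^ m + 1) \<le> 1"
    by (simp add: divide_le_eq_1)
  then have "(t ^ m / (t ^ m + 1)) powr (real k - 1/2) \<le> 1"
    using assms by (intro powr_le1) auto
  then show ?thesis
    unfolding kernel_factored[OF assms(1)] by (simp add: mult_left_le)
qed

lemma kernel1_less_power:
  assumes "t > 0"
  shows "kernel m j 1 t < t powr (real m / 2 - real j)"
proof -
  have "0 < t ^ m + 1"
    using assms by (intro add_pos_pos) auto
  then have "t ^ m / (t ^ m + 1) < 1"
    by (simp add: divide_less_eq_1)
  then have "(t ^ m / (t ^ m + 1)) powr (1/2) < 1 powr (1/2)"
    using assms by (intro powr_less_mono2) auto
  then show ?thesis
    unfolding kernel_factored[OF assms] using assms by simp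
qed

lemma kernel_le_1:
  assumes "0 < t" "t \<le> 1" "j \<le> m * k" "k \<ge> 1"
  shows "kernel m j k t \<le> 1"
proof -
  have "real j \<le> real (m * k)"
    using assms(3) by linarith
  then have "t powr (real (m * k) - real j) \<le> 1"
    using assms by (intro powr_le1) auto
  moreover have "1 \<le> (t ^ m + 1) powr (real k - 1/2)"
    using assms by (intro ge_one_powr_ge_zero) auto
  then have "(t ^ m + 1) powr (- (real k - 1/2)) \<le> 1"
    unfolding powr_minus using inverse_le_1_iff by fastforce
  ultimately show ?thesis
    unfolding kernel_def by (intro mult_le_one) auto
qed

text \<open>At infinity the kernel approaches the power t^(m/2-j) with relative error
  O(k t^(-m)), by Bernoulli's inequality applied to u^k.\<close>

lemma power_minus_kernel_le:
  assumes "t \<ge> 1" "k \<ge> 1"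
  shows "t powr (real m / 2 - real j) - kernel m j k t \<le> real k * t powr (real m / 2 - real j - real m)"
proof -
  have t0: "t > 0" "t ^ m > 0"
    using assms by auto
  define u where "u = t ^ m / (t ^ m + 1)"
  have pos: "0 < t ^ m + 1"
    using t0 by (simp add: add_pos_pos)
  have u: "0 < u" "u \<le> 1"
    unfolding u_def using t0 pos by (simp_all add: divide_le_eq_1)
  have "1 + real k * (u - 1) \<le> (1 + (u - 1)) ^ k"
    using u by (intro Bernoulli_inequality) auto
  also have "\<dots> = u powr real k"
    using u by (simp add: powr_realpow)
  also have "\<dots> \<le> u powr (real k - 1/2)"
    using u by (intro powr_mono') auto
  finally have bern: "1 - u powr (real k - 1/2) \<le> real k * (1 - u)"
    by (simp add: algebra_simps)
  have "1 - u = 1 / (t ^ m + 1)"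
    unfolding u_def using pos by (simp add: field_simps)
  also have "\<dots> \<le> 1 / t ^ m"
    using t0 pos by (intro divide_left_mono) simp_all
  finally have "real k * (1 - u) \<le> real k * (1 / t ^ m)"
    by (rule mult_left_mono) simp
  with bern have "1 - u powr (real k - 1/2) \<le> real k / t ^ m"
    by simp
  then have "t powr (real m / 2 - real j) * (1 - u powr (real k - 1/2)) \<le>
      t powr (real m / 2 - real j) * (real k / t ^ m)"
    by (intro mult_left_mono) auto
  also have "\<dots> = real k * t powr (real m / 2 - real j - real m)"
  proof -
    have "t powr (real m / 2 - real j - real m) = t powr (real m / 2 - real j) / t ^ m"
      by (simp only: powr_diff powr_realpow[OF t0(1)])
    then show ?thesis by simp
  qed
  finally show ?thesis
    unfolding kernel_factored[OF t0(1)] u_def[symmetric] by (simp add: right_diff_distrib)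
qed

text \<open>Convergence when 2j \<le> m + 1: the difference F_k - t^(m/2-j) is O(t^(m/2-j)) at 0
  and O(k t^(-m/2-j)) at \<infinity>.\<close>

lemma kernel_minus_power_integrable:
  assumes "1 \<le> j" "1 \<le> k" "2 * j \<le> m + 1"
  shows "(\<lambda>t. kernel m j k t - t powr (real m / 2 - real j)) integrable_on {0<..}"
proof (rule integrable_by_power_bounds[where \<alpha> = "real m / 2 - real j" and C = "real k" and \<beta> = "-3/2"])
  show "continuous_on {0<..} (\<lambda>t. kernel m j k t - t powr (real m / 2 - real j))"
    by (intro continuous_on_diff continuous_on_kernel continuous_intros) auto
next
  fix t :: real
  assume "0 < t" "t \<le> 1"
  then show "\<bar>kernel m j k t - t powr (real m / 2 - real j)\<bar> \<le> t powr (real m / 2 - real j)"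
    using kernel_le_power[of t k m j] kernel_nonneg[of m j k t] assms by simp
next
  fix t :: real
  assume "1 \<le> t"
  moreover have "t powr (real m / 2 - real j - real m) \<le> t powr (-3/2)"
    using \<open>1 \<le> t\<close> assms by (intro powr_mono) auto
  ultimately show "\<bar>kernel m j k t - t powr (real m / 2 - real j)\<bar> \<le> real k * t powr (-3/2)"
    using kernel_le_power[of t k m j] power_minus_kernel_le[of t k m j] assms
    by (smt (verit) mult_left_mono of_nat_0_le_iff)
qed (use assms in auto)

text \<open>Convergence when 2j \<ge> m + 3: the kernel itself is bounded on (0,1] and
  O(t^(m/2-j)) at \<infinity>.\<close>

lemma kernel_integrable:
  assumes "1 \<le> k" "j \<le> m * k" "real m + 3 \<le> 2 * real j"
  shows "kernel m j k integrable_on {0<..}"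
proof (rule integrable_by_power_bounds[OF continuous_on_kernel, where \<alpha> = 0 and C = 1 and \<beta> = "-3/2"])
  fix t :: real
  assume "0 < t" "t \<le> 1"
  then show "\<bar>kernel m j k t\<bar> \<le> t powr 0"
    using kernel_le_1[of t j m k] kernel_nonneg[of m j k t] assms by simp
next
  fix t :: real
  assume "1 \<le> t"
  moreover have "t powr (real m / 2 - real j) \<le> t powr (-3/2)"
    using \<open>1 \<le> t\<close> assms by (intro powr_mono) auto
  ultimately show "\<bar>kernel m j k t\<bar> \<le> 1 * t powr (-3/2)"
    using kernel_le_power[of t k m j] kernel_nonneg[of m j k t] assms by simp
qed auto

lemma kernel_minus_principal_integrable:
  assumes "1 \<le> j" "1 \<le> k" "j \<le> m * k" "2 * j \<noteq> m + 2"
  shows "(\<lambda>t. kernel m j k t - principal m j t) integrable_on {0<..}"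
proof (cases "2 * j \<le> m + 1")
  case True
  then show ?thesis
    using kernel_minus_power_integrable[OF assms(1,2) True] by (simp add: principal_def)
next
  case False
  then have "real m + 3 \<le> 2 * real j"
    using assms(4) by auto
  then show ?thesis
    using kernel_integrable[OF assms(2,3)] False by (simp add: principal_def)
qed

text \<open>The first weight has a definite sign: w_1 < 0 when the power is subtracted (since
  F_1 < t^(m/2-j)) and w_1 > 0 otherwise.\<close>

lemma weight_first_nonzero:
  assumes "1 \<le> j" "j \<le> m" "2 * j \<noteq> m + 2"
  shows "weight m j 1 \<noteq> 0"
proof -
  have int: "(\<lambda>t. kernel m j 1 t - principal m j t) integrable_on {0<..}"
    using assms by (intro kernel_minus_principal_integrable) auto
  have cont: "continuous_on {0<..} (\<lambda>t. kernel m j 1 t - principal m j t)"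
    by (intro continuous_on_diff continuous_on_kernel continuous_on_principal)
  show ?thesis
  proof (cases "2 * j \<le> m + 1")
    case True
    have "integral {0<..} (\<lambda>t. - (kernel m j 1 t - principal m j t)) > 0"
      using True kernel1_less_power[of _ m j] kernel1_less_power[of 1 m j]
      by (intro integral_pos_if_pos_at_1 integrable_neg[OF int] continuous_on_minus[OF cont])
         (auto simp: principal_def less_imp_le)
    then show ?thesis
      unfolding weight_def integral_neg by simp
  next
    case False
    have "integral {0<..} (\<lambda>t. kernel m j 1 t - principal m j t) > 0"
      using False by (intro integral_pos_if_pos_at_1[OF cont int])
        (auto simp: principal_def kernel_nonneg kernel_def)
    then show ?thesis
      unfolding weight_def by simp
  qed
qed

section \<open>The coefficients c_j as weighted sums\<close>

lemma gj_minus_principal: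
  "gj m a j t - (if 2 * j \<le> m + 1 then bj m a j * of_real (t powr (real m / 2 - real j)) else 0) =
     (\<Sum>k=1..j. bjk m a j k * of_real (kernel m j k t - principal m j t))"
  unfolding gj_def bj_def kernel_def principal_def
  by (simp add: sum_distrib_right sum_subtractf[symmetric] right_diff_distrib)

text \<open>Away from the exceptional index, K_{m,j} = \<Sum>_k b_{j,k} w_k.  A summand with mk < j
  has b_{j,k} = 0, so only convergent weights matter.\<close>

lemma Kmj_weighted_sum:
  assumes "1 \<le> j" "\<not> (even m \<and> j = m div 2 + 1)"
  shows "Kmj m j a = (\<Sum>k=1..j. bjk m a j k * of_real (weight m j k))"
proof -
  have exc: "2 * j \<noteq> m + 2"
    using assms(2) by presburger
  have "Kmj m j a = integral {0<..} (\<lambda>t. gj m a j t -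
      (if 2 * j \<le> m + 1 then bj m a j * of_real (t powr (real m / 2 - real j)) else 0))"
    unfolding Kmj_def using assms by auto
  also have "\<dots> = (\<Sum>k=1..j. bjk m a j k * of_real (weight m j k))"
    unfolding gj_minus_principal weight_def
  proof (rule integral_lincomb_of_real)
    fix k
    assume "k \<in> {1..j}" "bjk m a j k \<noteq> 0"
    then have "j \<le> m * k" "1 \<le> k"
      by (auto simp: bjk_def split: if_splits)
    then show "(\<lambda>t. kernel m j k t - principal m j t) integrable_on {0<..}"
      using assms exc by (intro kernel_minus_principal_integrable) auto
  qed simp
  finally show ?thesis .
qed

lemma cos_nonzero:
  assumes "1 \<le> j" "j \<le> m" "2 * j \<noteq> m + 2"
  shows "cos ((real j - 1) * pi / real m) \<noteq> 0"
proof -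
  define x where "x = (real j - 1) * pi / real m"
  have "(real j - 1) * pi < real m * pi"
    using assms by (intro mult_strict_right_mono) auto
  then have "0 \<le> x" "x < pi"
    unfolding x_def using assms by (auto simp: field_simps)
  moreover have "x \<noteq> pi / 2"
  proof
    assume "x = pi / 2"
    then have "(2 * (real j - 1)) * pi = real m * pi"
      unfolding x_def using assms by (simp add: field_simps)
    then have "real (2 * j) = real (m + 2)"
      by simp
    with assms(3) show False
      by (simp only: of_nat_eq_iff)
  qed
  then consider "x < pi / 2" | "pi / 2 < x"
    by linarith
  then have "cos x \<noteq> 0"
  proof cases
    case 1
    have "cos x > 0"
      by (rule cos_gt_zero_pi) (use \<open>0 \<le> x\<close> 1 in auto)
    then show ?thesis by simp
  next
    case 2
    have "cos (pi - x) > 0"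
      by (rule cos_gt_zero_pi) (use \<open>x < pi\<close> 2 in auto)
    then show ?thesis by simp
  qed
  then show ?thesis
    unfolding x_def .
qed

lemma cj_weighted_sum:
  assumes "1 \<le> j" "1 \<le> m"
  obtains C w where "\<And>a. cj m j a = C * (\<Sum>k=1..j. bjk m a j k * w k)"
    and "j \<le> m \<Longrightarrow> C * w 1 \<noteq> 0"
proof (cases "even m \<and> j = m div 2 + 1")
  case True
  have "cj m j a = (- 1 / of_nat m) * (\<Sum>k=1..j. bjk m a j k * 1)" for a
    using True unfolding cj_def nu_def bj_def by (simp add: diff_divide_distrib add_divide_distrib)
  moreover have "(- 1 / of_nat m) * 1 \<noteq> (0 :: complex)"
    using assms by simp
  ultimately show ?thesis
    by (rule that[of "- 1 / of_nat m" "\<lambda>_. 1"])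
next
  case False
  define C where "C = complex_of_real (cos ((real j - 1) * pi / real m) / pi)"
  have "cj m j a = C * (\<Sum>k=1..j. bjk m a j k * of_real (weight m j k))" for a
    unfolding cj_def if_not_P[OF False] Kmj_weighted_sum[OF assms(1) False] C_def ..
  moreover have "C * of_real (weight m j 1) \<noteq> 0" if "j \<le> m"
  proof -
    have "2 * j \<noteq> m + 2"
      using False by presburger
    then show ?thesis
      unfolding C_def using assms that cos_nonzero weight_first_nonzero by simp
  qed
  ultimately show ?thesis
    by (rule that[of C "\<lambda>k. of_real (weight m j k)"])
qed

lemma cj_0_const: "cj m 0 a = cj m 0 a'"
  unfolding cj_def Kmj_def by simp

lemma mpoly_cj:
  assumes "1 \<le> m"
  shows "mpoly m (cj m j)"
proof (cases "j = 0")
  case True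
  have "cj m 0 = (\<lambda>a. cj m 0 (\<lambda>_. 0))"
    by (rule ext) (rule cj_0_const)
  then show ?thesis
    using True mpoly_const[of m "cj m 0 (\<lambda>_. 0)"] by metis
next
  case False
  then have "1 \<le> j"
    by simp
  then obtain C w where "\<And>a. cj m j a = C * (\<Sum>k=1..j. bjk m a j k * w k)"
    using cj_weighted_sum[OF _ assms] by metis
  then have "cj m j = (\<lambda>a. C * (\<Sum>k=1..j. bjk m a j k * w k))"
    by (simp add: fun_eq_iff)
  then show ?thesis
    by (simp only: mpoly_weighted_sum)
qed

lemma cj_local:
  assumes "1 \<le> m" and agree: "\<forall>i\<in>{1..j}. a i = a' i"
  shows "cj m j a = cj m j a'"
proof (cases "j = 0")
  case False
  then have "1 \<le> j"
    by simp
  then obtain C w where cj: "\<And>a. cj m j a = C * (\<Sum>k=1..j. bjk m a j k * w k)"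
    using cj_weighted_sum[OF _ assms(1)] by metis
  show ?thesis
    unfolding cj using weighted_sum_local[OF agree] by simp
qed (simp add: cj_0_const)

lemma cj_affine:
  assumes "1 \<le> j" "j \<le> m"
  shows "\<exists>\<alpha> \<beta>. \<alpha> \<noteq> 0 \<and> (\<forall>z. cj m j (a(j := z)) = \<alpha> * z + \<beta>)"
proof -
  obtain C w where cj: "\<And>a. cj m j a = C * (\<Sum>k=1..j. bjk m a j k * w k)" and "C * w 1 \<noteq> 0"
    by (rule cj_weighted_sum[OF assms(1) order_trans[OF assms]]) (use assms(2) in blast)
  have "cj m j (a(j := z)) = C * w 1 / 2 * z + C * (\<Sum>k=2..j. bjk m a j k * w k)" for z
    unfolding cj weighted_sum_affine[OF assms] by (simp add: algebra_simps)
  moreover have "C * w 1 / 2 \<noteq> 0"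
    using \<open>C * w 1 \<noteq> 0\<close> by simp
  ultimately show ?thesis
    by blast
qed

theorem mainTheorem6:
  fixes m :: nat
  assumes "m \<ge> 3"
  shows "(\<forall>j \<le> m + 1. \<exists>S :: (nat \<Rightarrow> nat) set. \<exists>coef :: (nat \<Rightarrow> nat) \<Rightarrow> complex.
            finite S \<and> (\<forall>a. cj m j a = (\<Sum>\<alpha>\<in>S. coef \<alpha> * (\<Prod>i=1..m. a i ^ \<alpha> i))))
       \<and> (\<forall>a a'. cj m 0 a = cj m 0 a')
       \<and> (\<forall>j\<in>{1..m}.
            (\<forall>a a'. (\<forall>i\<in>{1..j}. a i = a' i) \<longrightarrow> cj m j a = cj m j a')
          \<and> (\<forall>a. \<exists>\<alpha> \<beta> :: complex. \<alpha> \<noteq> 0 \<and> (\<forall>z. cj m j (a(j := z)) = \<alpha> * z + \<beta>)))"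
proof -
  have m: "1 \<le> m"
    using assms by simp
  show ?thesis
  proof (intro conjI allI ballI impI)
    fix j :: nat
    show "\<exists>S coef. finite S \<and> (\<forall>a. cj m j a = (\<Sum>\<alpha>\<in>S. coef \<alpha> * (\<Prod>i=1..m. a i ^ \<alpha> i)))"
      using mpoly_cj[OF m, of j] unfolding mpoly_def .
  next
    fix a a' :: "nat \<Rightarrow> complex"
    show "cj m 0 a = cj m 0 a'"
      by (rule cj_0_const)
  next
    fix j :: nat and a a' :: "nat \<Rightarrow> complex"
    assume "\<forall>i\<in>{1..j}. a i = a' i"
    then show "cj m j a = cj m j a'"
      by (rule cj_local[OF m])
  next
    fix j :: nat and a :: "nat \<Rightarrow> complex"
    assume "j \<in> {1..m}"
    then show "\<exists>\<alpha> \<beta>. \<alpha> \<noteq> 0 \<and> (\<forall>z. cj m j (a(j := z)) = \<alpha> * z + \<beta>)"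
      by (intro cj_affine) auto
  qed
qed

end
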